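(* Let $G=\bigcap_{i\in\mathcal I}G_i$ be a nonempty bounded domain in $\mathbb R^d$, where $\mathcal I$ is a nonempty finite index set and each $G_i$ is a nonempty domain. Then the function $D:[0,\infty)\to[0,\infty]$ defined by $D(0)=0$ and, for $r>0$, $$D(r)=\sup_{\emptyset\ne\mathcal J\subset\mathcal I}\sup\Big\{\mathrm{dist}\Big(x,\bigcap_{j\in\mathcal J}(\partial G_j\cap\partial G)\Big):x\in\bigcap_{j\in\mathcal J}U_r(\partial G_j\cap\partial G)\Big\}$$ satisfies $D(r)\to0$ as $r\to0$.
   Context: $\mathrm{dist}(x,S)=\inf\{\|x-y\|:y\in S\}$ with $\mathrm{dist}(x,\emptyset)=\infty$; for $r>0$, $U_r(S)=\{x\in\mathbb R^d:\mathrm{dist}(x,S)\le r\}$, with $U_r(\emptyset)=\emptyset$; the supremum over an empty set is $0$. *)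

theory Defs
  imports "HOL-Analysis.Analysis"
begin

definition edist_set :: "'a::metric_space \<Rightarrow> 'a set \<Rightarrow> ereal" where
  "edist_set x S = (if S = {} then \<infinity> else ereal (infdist x S))"

text \<open>Closed r-neighbourhood U_r(S) = {x. dist(x,S) \<le> r}; automatically U_r({}) = {}.\<close>
definition nbhd :: "real \<Rightarrow> 'a::metric_space set \<Rightarrow> 'a set" where
  "nbhd r S = {x. edist_set x S \<le> ereal r}"

definition sup0 :: "ereal set \<Rightarrow> ereal" where
  "sup0 A = (if A = {} then 0 else Sup A)"

definition domain :: "'a::topological_space set \<Rightarrow> bool" where
  "domain S \<longleftrightarrow> S \<noteq> {} \<and> open S \<and> connected S"

definition Dfun :: "'i set \<Rightarrow> ('i \<Rightarrow> 'a::euclidean_space set) \<Rightarrow> 'a set \<Rightarrow> real \<Rightarrow> ereal" where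
  "Dfun I Gs G r =
     (if r = 0 then 0 else
      sup0 ((\<lambda>J. sup0 ((\<lambda>x. edist_set x (\<Inter>j\<in>J. frontier (Gs j) \<inter> frontier G))
                         ` (\<Inter>j\<in>J. nbhd r (frontier (Gs j) \<inter> frontier G))))
            ` {J. J \<noteq> {} \<and> J \<subseteq> I}))"

end

theory Submission
  imports Defs
begin

text \<open>For compact sets \<open>F j\<close>, \<open>j \<in> J\<close>, the function \<open>x \<mapsto> \<Sum>j\<in>J. infdist x (F j)\<close> vanishes
  exactly on \<open>\<Inter>j\<in>J. F j\<close>. Hence it has a positive minimum on the compact set of points
  within distance 1 of one \<open>F j\<^sub>0\<close> and at distance at least \<open>\<epsilon>\<close> from the intersection, so a
  point within a small distance \<open>\<delta>\<close> of every \<open>F j\<close> must be \<open>\<epsilon>\<close>-close to the intersection.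
  Each inner supremum of \<open>D(r)\<close> is therefore eventually small, and \<open>D(r)\<close> is a finite
  supremum of them.\<close>

lemma compact_continuous_pos_bounded_below:
  fixes g :: "'a::topological_space \<Rightarrow> real"
  assumes "compact A" "continuous_on A g" "\<And>x. x \<in> A \<Longrightarrow> g x > 0"
  obtains m where "m > 0" "\<And>x. x \<in> A \<Longrightarrow> m \<le> g x"
proof (cases "A = {}")
  case True
  then show ?thesis by (intro that[of 1]) auto
next
  case False
  then obtain x\<^sub>0 where "x\<^sub>0 \<in> A" "\<forall>x\<in>A. g x\<^sub>0 \<le> g x"
    using continuous_attains_inf[OF assms(1) _ assms(2)] by blast
  then show ?thesis using assms(3) that by blast
qed

lemma near_all_compact_imp_near_Inter:
  fixes F :: "'j \<Rightarrow> 'a::heine_borel set"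
  assumes "finite J" "J \<noteq> {}" "\<And>j. j \<in> J \<Longrightarrow> compact (F j)" "\<epsilon> > 0"
  obtains \<delta> where "\<delta> > 0"
    "\<And>x. \<forall>j\<in>J. F j \<noteq> {} \<and> infdist x (F j) < \<delta> \<Longrightarrow> \<exists>y\<in>(\<Inter>j\<in>J. F j). dist x y < \<epsilon>"
proof (cases "\<exists>j\<in>J. F j = {}")
  case True
  then show ?thesis by (intro that[of 1]) auto
next
  case False
  obtain j\<^sub>0 where j\<^sub>0: "j\<^sub>0 \<in> J" using \<open>J \<noteq> {}\<close> by blast
  define K where "K = (\<Inter>j\<in>J. F j)"
  define g where "g x = (\<Sum>j\<in>J. infdist x (F j))" for x
  define B where "B = {x. infdist x (F j\<^sub>0) \<le> 1}"
  define A where "A = B - (\<Union>y\<in>K. ball y \<epsilon>)"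
  have "compact B"
    unfolding B_def using j\<^sub>0 False assms(3) by (intro compact_infdist_le) auto
  then have "compact A"
    unfolding A_def by (intro compact_diff open_UN) auto
  have "continuous_on A g"
    unfolding g_def by (intro continuous_intros)
  have g_pos: "g x > 0" if "x \<in> A" for x
  proof (rule ccontr)
    assume "\<not> g x > 0"
    moreover have "g x \<ge> 0" unfolding g_def by (simp add: sum_nonneg infdist_nonneg)
    ultimately have "g x = 0" by simp
    then have "\<forall>j\<in>J. infdist x (F j) = 0"
      unfolding g_def using \<open>finite J\<close> by (simp add: sum_nonneg_eq_0_iff infdist_nonneg)
    then have "x \<in> K"
      unfolding K_def using False assms(3)
      by (auto simp: in_closed_iff_infdist_zero compact_imp_closed)
    then show False using that \<open>\<epsilon> > 0\<close> unfolding A_def by auto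
  qed
  obtain m where "m > 0" and m: "\<And>x. x \<in> A \<Longrightarrow> m \<le> g x"
    using compact_continuous_pos_bounded_below[OF \<open>compact A\<close> \<open>continuous_on A g\<close> g_pos] by blast
  show ?thesis
  proof (rule that)
    show "min 1 (m / card J) > 0"
      using \<open>m > 0\<close> \<open>finite J\<close> \<open>J \<noteq> {}\<close> by (simp add: card_gt_0_iff)
  next
    fix x assume x: "\<forall>j\<in>J. F j \<noteq> {} \<and> infdist x (F j) < min 1 (m / card J)"
    then have "x \<in> B" using j\<^sub>0 unfolding B_def by fastforce
    have "card J > 0" using \<open>finite J\<close> \<open>J \<noteq> {}\<close> by (simp add: card_gt_0_iff)
    have "g x < (\<Sum>j\<in>J. m / card J)"
      unfolding g_def using x \<open>finite J\<close> \<open>J \<noteq> {}\<close> by (intro sum_strict_mono) auto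
    also have "\<dots> = m" using \<open>card J > 0\<close> by simp
    finally have "x \<notin> A" using m by (meson not_le)
    with \<open>x \<in> B\<close> show "\<exists>y\<in>(\<Inter>j\<in>J. F j). dist x y < \<epsilon>"
      unfolding A_def K_def by (auto simp: dist_commute)
  qed
qed

lemma sup0_nonneg: "(\<And>y. y \<in> A \<Longrightarrow> 0 \<le> y) \<Longrightarrow> 0 \<le> sup0 A"
  unfolding sup0_def by (auto intro: order_trans[OF _ Sup_upper])

lemma sup0_le: "0 \<le> c \<Longrightarrow> (\<And>y. y \<in> A \<Longrightarrow> y \<le> c) \<Longrightarrow> sup0 A \<le> c"
  unfolding sup0_def by (simp add: Sup_least)

lemma edist_set_nonneg: "0 \<le> edist_set x S"
  unfolding edist_set_def by (simp add: infdist_nonneg)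

lemma mem_nbhd_iff: "x \<in> nbhd r S \<longleftrightarrow> S \<noteq> {} \<and> infdist x S \<le> r"
  unfolding nbhd_def edist_set_def by simp

lemma edist_set_le: "y \<in> S \<Longrightarrow> edist_set x S \<le> ereal (dist x y)"
  unfolding edist_set_def using infdist_le[of y S x] by auto

lemma eventually_sup0_edist_Inter_nbhd_le:
  fixes F :: "'j \<Rightarrow> 'a::heine_borel set"
  assumes "finite J" "J \<noteq> {}" "\<And>j. j \<in> J \<Longrightarrow> compact (F j)" "e > 0"
  shows "eventually (\<lambda>r. sup0 ((\<lambda>x. edist_set x (\<Inter>j\<in>J. F j)) ` (\<Inter>j\<in>J. nbhd r (F j)))
           \<le> ereal e) (at_right 0)"
proof -
  obtain \<delta> where "\<delta> > 0" and near:
    "\<And>x. \<forall>j\<in>J. F j \<noteq> {} \<and> infdist x (F j) < \<delta> \<Longrightarrow> \<exists>y\<in>(\<Inter>j\<in>J. F j). dist x y < e"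
    using near_all_compact_imp_near_Inter[of J F e, OF assms] by blast
  have "sup0 ((\<lambda>x. edist_set x (\<Inter>j\<in>J. F j)) ` (\<Inter>j\<in>J. nbhd r (F j))) \<le> ereal e"
    if "r < \<delta>" for r
  proof (rule sup0_le)
    fix z assume "z \<in> (\<lambda>x. edist_set x (\<Inter>j\<in>J. F j)) ` (\<Inter>j\<in>J. nbhd r (F j))"
    then obtain x where z: "z = edist_set x (\<Inter>j\<in>J. F j)" and x: "\<forall>j\<in>J. x \<in> nbhd r (F j)"
      by blast
    have "\<forall>j\<in>J. F j \<noteq> {} \<and> infdist x (F j) < \<delta>"
      using x \<open>r < \<delta>\<close> by (auto simp: mem_nbhd_iff)
    then obtain y where "y \<in> (\<Inter>j\<in>J. F j)" "dist x y < e" using near by blast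
    then have "edist_set x (\<Inter>j\<in>J. F j) \<le> ereal (dist x y)" by (intro edist_set_le)
    also have "\<dots> \<le> ereal e" using \<open>dist x y < e\<close> by simp
    finally show "z \<le> ereal e" unfolding z .
  qed (use \<open>e > 0\<close> in simp)
  then show ?thesis
    unfolding eventually_at_right_field using \<open>\<delta> > 0\<close> by blast
qed

lemma tendsto_ereal_0I:
  fixes f :: "'b \<Rightarrow> ereal"
  assumes "eventually (\<lambda>x. 0 \<le> f x) F" "\<And>e. e > 0 \<Longrightarrow> eventually (\<lambda>x. f x \<le> ereal e) F"
  shows "(f \<longlongrightarrow> 0) F"
proof (rule order_tendstoI)
  fix a :: ereal assume "a < 0"
  with assms(1) show "eventually (\<lambda>x. a < f x) F"
    by (auto elim: eventually_mono)
next
  fix a :: ereal assume "0 < a"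
  then obtain e where "0 < ereal e" "ereal e < a" using ereal_dense2 by blast
  with assms(2)[of e] show "eventually (\<lambda>x. f x < a) F"
    by (auto elim: eventually_mono)
qed

lemma tendsto_sup0_image_finite:
  fixes f :: "'b \<Rightarrow> 'j \<Rightarrow> ereal"
  assumes "finite Js" "\<And>x J. 0 \<le> f x J"
    and "\<And>J e. J \<in> Js \<Longrightarrow> e > 0 \<Longrightarrow> eventually (\<lambda>x. f x J \<le> ereal e) F"
  shows "((\<lambda>x. sup0 (f x ` Js)) \<longlongrightarrow> 0) F"
proof (rule tendsto_ereal_0I)
  show "eventually (\<lambda>x. 0 \<le> sup0 (f x ` Js)) F"
    by (intro always_eventually allI sup0_nonneg) (auto intro: assms(2))
next
  fix e :: real assume "e > 0"
  with assms(3) have "eventually (\<lambda>x. \<forall>J\<in>Js. f x J \<le> ereal e) F"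
    by (intro eventually_ball_finite[OF \<open>finite Js\<close>]) auto
  then show "eventually (\<lambda>x. sup0 (f x ` Js) \<le> ereal e) F"
    using \<open>e > 0\<close> by (auto elim!: eventually_mono intro: sup0_le)
qed

theorem lemmaA2:
  fixes I :: "'i set" and Gs :: "'i \<Rightarrow> 'a::euclidean_space set" and G :: "'a set"
  assumes "finite I" and "I \<noteq> {}"
    and "\<And>i. i \<in> I \<Longrightarrow> domain (Gs i)"
    and "G = (\<Inter>i\<in>I. Gs i)"
    and "domain G" and "bounded G"
  shows "(Dfun I Gs G \<longlongrightarrow> 0) (at_right 0)"
proof -
  define F where "F j = frontier (Gs j) \<inter> frontier G" for j
  define Js where "Js = {J. J \<noteq> {} \<and> J \<subseteq> I}"
  define inner where
    "inner r J = sup0 ((\<lambda>x. edist_set x (\<Inter>j\<in>J. F j)) ` (\<Inter>j\<in>J. nbhd r (F j)))" for r J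
  have "compact (F j)" for j
    unfolding F_def using compact_frontier_bounded[OF \<open>bounded G\<close>] by (simp add: closed_Int_compact)
  then have "eventually (\<lambda>r. inner r J \<le> ereal e) (at_right 0)" if "J \<in> Js" "e > 0" for J e
    unfolding inner_def using that finite_subset[of J I] \<open>finite I\<close>
    by (intro eventually_sup0_edist_Inter_nbhd_le) (auto simp: Js_def)
  moreover have "finite Js"
    unfolding Js_def using \<open>finite I\<close> by (auto intro: finite_subset[of _ "Pow I"])
  moreover have "0 \<le> inner r J" for r J
    unfolding inner_def by (intro sup0_nonneg) (auto simp: edist_set_nonneg)
  ultimately have "((\<lambda>r. sup0 (inner r ` Js)) \<longlongrightarrow> 0) (at_right 0)"
    by (intro tendsto_sup0_image_finite)
  moreover have "eventually (\<lambda>r. sup0 (inner r ` Js) = Dfun I Gs G r) (at_right 0)"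
    unfolding eventually_at_right_field Dfun_def inner_def F_def Js_def
    by (intro exI[of _ 1]) simp
  ultimately show ?thesis
    by (rule Lim_transform_eventually)
qed

end
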